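(* Let $B_1,\dots,B_p,B_{p+1}=V$, $\zeta>0$ and $\tau\in(0,1)$ be as in Lemma 7.2 (a partition of $\mathbb T^d$ with $B_i\subset\pi(K^0_i)$, $f(B_i)\subset\pi(K^1_i)$ for open unit cubes, such that for every disk $\Delta^{cu}$ tangent to $C^{cu}$ with normalized Lebesgue measure $m$, the set $I_n(\underline t)$ of $x\in\Delta^{cu}$ with $\#\{0\le j<n:f^j_{\underline t}x\in B_1\cup\dots\cup B_p\}<\zeta n$ has $m(I_n(\underline t))\le\tau^n$ for all $\underline t$ and large $n$). Given $\sigma_2\in(0,1)$ there are $\eta>0$ and $c>0$ such that if condition (C) holds with constant $\sigma_2$ and condition (D) holds with $\delta_0=\eta$, then for every disk $\Delta^{cu}$ tangent to $C^{cu}$: (1) $m\big(\{x\in\Delta^{cu}:\sum_{j=0}^{n-1}\log\|(Df|T_{f^j_{\underline t}x}\Delta^{cu}_j(\underline t))^{-1}\|\le -cn\}\big)\ge1-\tau^n$ for all $\underline t\in T^{\mathbb N}$ and all large $n$; (2) $\limsup_{n\to\infty}\frac1n\sum_{j=0}^{n-1}\log\|(Df|T_{f^j_{\underline t}x}\Delta^{cu}_j(\underline t))^{-1}\|\le -c$ for $\theta_\varepsilon^{\mathbb N}\times m$-a.e. $(\underline t,x)\in T^{\mathbb N}\times\Delta^{cu}$; and (2) also holds for the constant sequence $\underline t=(f,f,\dots)$ and $m$-a.e. $x\in\Delta^{cu}$. Here $\Delta^{cu}_j(\underline t)=f^j_{\underline t}\Delta^{cu}$.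
   Context: $\mathbb T^d=\mathbb R^d/\mathbb Z^d$, $d\ge2$, $\pi$ the projection, $\hat f$ a linear Anosov diffeomorphism with splitting $E^u\oplus E^s$, $V$ a small closed domain with $V\subset\pi(K^0)$, $\hat f(V)\subset\pi(K^1)$ for open unit cubes. Conditions on a diffeomorphism $g$: (A) invariant cone fields $C^{cu},C^{cs}$ of small width containing $E^u,E^s$; (B) $|\det(Dg|T_x\Delta^{cu})|>\sigma_1$, $|\det(Dg|T_x\Delta^{cs})|<\sigma_1^{-1}$ for some $\sigma_1>1$ and all disks tangent to the cones; (C) for $x\notin V$, $\|(Dg|T_x\Delta^{cu})^{-1}\|<\sigma_2$ and $\|Dg|T_x\Delta^{cs}\|<\sigma_2$; (D) for $x\in V$, $\|(Dg|T_x\Delta^{cu})^{-1}\|<1+\delta_0$ and $\|Dg|T_x\Delta^{cs}\|<1+\delta_0$. $f$ is a $C^2$ diffeomorphism satisfying (A)–(D); $T$ is a $C^2$-neighbourhood of $f$ in which every map satisfies (A)–(D); $f_t=t$ for $t\in T$; $\theta_\varepsilon$ are probabilities on $T$; $f^n_{\underline t}=t_n\circ\cdots\circ t_1$ for $\underline t\in T^{\mathbb N}$; $m$ is Lebesgue measure on $\Delta^{cu}$ normalized to $m(\Delta^{cu})=1$. *)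

theory Defs
  imports "HOL-Analysis.Analysis" "HOL-Probability.Probability"
begin

text \<open>The torus T^d = R^d / Z^d is modelled through lifts: points are vectors
  in real^'d, subsets of the torus are Z^d-periodic subsets of real^'d (their
  preimages under the projection pi), maps of the torus are represented by lifts
  R^d -> R^d.\<close>

definition Zd :: "(real^'d) set" where
  "Zd = {k. \<forall>i. k $ i \<in> \<int>}"

definition zperiodic :: "(real^'d) set \<Rightarrow> bool" where
  "zperiodic S \<longleftrightarrow> (\<forall>x k. k \<in> Zd \<longrightarrow> (x \<in> S \<longleftrightarrow> x + k \<in> S))"

text \<open>Open unit cube with corner c, and the preimage under pi of its projection pi(K).\<close>
definition unit_cube :: "real^'d \<Rightarrow> (real^'d) set" where
  "unit_cube c = {x. \<forall>i. c $ i < x $ i \<and> x $ i < c $ i + 1}"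

definition proj_pre :: "(real^'d) set \<Rightarrow> (real^'d) set" where
  "proj_pre K = {x. \<exists>k\<in>Zd. x + k \<in> K}"

definition stable_sp :: "real^'d^'d \<Rightarrow> (real^'d) set" where
  "stable_sp A = {v. (\<lambda>n. (((*v) A) ^^ n) v) \<longlonglongrightarrow> 0}"

definition unstable_sp :: "real^'d^'d \<Rightarrow> (real^'d) set" where
  "unstable_sp A = {v. (\<lambda>n. (((*v) (matrix_inv A)) ^^ n) v) \<longlonglongrightarrow> 0}"

text \<open>Linear Anosov automorphism of the torus: integer matrix, |det| = 1, hyperbolic
  (R^d = E^s + E^u, equivalently no eigenvalue of modulus one).\<close>
definition linear_anosov :: "real^'d^'d \<Rightarrow> bool" where
  "linear_anosov A \<longleftrightarrow> (\<forall>i j. A $ i $ j \<in> \<int>) \<and> \<bar>det A\<bar> = 1 \<and>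
     (\<forall>v. \<exists>a b. a \<in> stable_sp A \<and> b \<in> unstable_sp A \<and> v = a + b)"

definition cone_around :: "real \<Rightarrow> (real^'d) set \<Rightarrow> (real^'d) set \<Rightarrow> (real^'d) set" where
  "cone_around a E F = {u + w |u w. u \<in> E \<and> w \<in> F \<and> norm w \<le> a * norm u}"

definition C2_with ::
  "(real^'d \<Rightarrow> real^'d) \<Rightarrow> (real^'d \<Rightarrow> ((real^'d) \<Rightarrow>\<^sub>L (real^'d)))
     \<Rightarrow> (real^'d \<Rightarrow> ((real^'d) \<Rightarrow>\<^sub>L ((real^'d) \<Rightarrow>\<^sub>L (real^'d)))) \<Rightarrow> bool" where
  "C2_with g D D2 \<longleftrightarrow> (\<forall>x. (g has_derivative blinfun_apply (D x)) (at x)) \<and>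
     (\<forall>x. (D has_derivative blinfun_apply (D2 x)) (at x)) \<and> continuous_on UNIV D2"

definition torus_C2_diffeo :: "(real^'d \<Rightarrow> real^'d) \<Rightarrow> bool" where
  "torus_C2_diffeo g \<longleftrightarrow>
     (\<exists>M::real^'d^'d. (\<forall>i j. M $ i $ j \<in> \<int>) \<and> \<bar>det M\<bar> = 1 \<and>
        (\<forall>x k. k \<in> Zd \<longrightarrow> g (x + k) = g x + M *v k)) \<and>
     bij g \<and> (\<exists>D D2. C2_with g D D2) \<and>
     (\<forall>x. bij (frechet_derivative g (at x)))"

definition C2_close :: "(real^'d \<Rightarrow> real^'d) \<Rightarrow> (real^'d \<Rightarrow> real^'d) \<Rightarrow> real \<Rightarrow> bool" where
  "C2_close f g e \<longleftrightarrow> (\<exists>Df D2f Dg D2g. C2_with f Df D2f \<and> C2_with g Dg D2g \<and>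
     (\<forall>x. dist (f x) (g x) < e \<and> norm (Df x - Dg x) < e \<and> norm (D2f x - D2g x) < e))"

definition C2_nbhd :: "(real^'d \<Rightarrow> real^'d) set \<Rightarrow> (real^'d \<Rightarrow> real^'d) \<Rightarrow> bool" where
  "C2_nbhd T f \<longleftrightarrow> f \<in> T \<and> (\<forall>g\<in>T. torus_C2_diffeo g) \<and>
     (\<exists>e>0. \<forall>g. torus_C2_diffeo g \<and> C2_close f g e \<longrightarrow> g \<in> T)"

definition restr_norm :: "(real^'d \<Rightarrow> real^'d) \<Rightarrow> (real^'d) set \<Rightarrow> real" where
  "restr_norm L E = Sup {norm (L v) / norm v |v. v \<in> E \<and> v \<noteq> 0}"

definition restr_inv_norm :: "(real^'d \<Rightarrow> real^'d) \<Rightarrow> (real^'d) set \<Rightarrow> real" where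
  "restr_inv_norm L E = Sup {norm v / norm (L v) |v. v \<in> E \<and> v \<noteq> 0}"

text \<open>k-dimensional volume factor of a linear map M : R^k -> R^d
  (square root of the Gram determinant).\<close>
definition jac :: "(real^'k \<Rightarrow> real^'d) \<Rightarrow> real" where
  "jac M = sqrt (det (transpose (matrix M) ** matrix M))"

text \<open>|det (L | range M)| for an injective linear M parametrising the plane range M.\<close>
definition restr_det :: "(real^'d \<Rightarrow> real^'d) \<Rightarrow> (real^'k \<Rightarrow> real^'d) \<Rightarrow> real" where
  "restr_det L M = jac (L \<circ> M) / jac M"

definition tangent_plane :: "(real^'d \<Rightarrow> (real^'d) set) \<Rightarrow> real^'d \<Rightarrow> (real^'k \<Rightarrow> real^'d) \<Rightarrow> bool" where
  "tangent_plane C x M \<longleftrightarrow> linear M \<and> inj M \<and> range M \<subseteq> C x"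

text \<open>Conditions (A)--(D) on a map g (lift), for cone fields Ccu, Ccs, whose
  cu-planes have dimension CARD('u) and cs-planes dimension CARD('s).\<close>
definition cond_A :: "(real^'d \<Rightarrow> (real^'d) set) \<Rightarrow> (real^'d \<Rightarrow> (real^'d) set) \<Rightarrow> (real^'d \<Rightarrow> real^'d) \<Rightarrow> bool" where
  "cond_A Ccu Ccs g \<longleftrightarrow> (\<forall>x. frechet_derivative g (at x) ` Ccu x \<subseteq> Ccu (g x)) \<and>
     (\<forall>x v. frechet_derivative g (at x) v \<in> Ccs (g x) \<longrightarrow> v \<in> Ccs x)"

definition cond_B :: "'u::finite itself \<Rightarrow> 's::finite itself \<Rightarrow> (real^'d \<Rightarrow> (real^'d) set) \<Rightarrow> (real^'d \<Rightarrow> (real^'d) set) \<Rightarrow> real \<Rightarrow> (real^'d \<Rightarrow> real^'d) \<Rightarrow> bool" where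
  "cond_B _ _ Ccu Ccs \<sigma>1 g \<longleftrightarrow>
     (\<forall>x (M::real^'u \<Rightarrow> real^'d). tangent_plane Ccu x M \<longrightarrow> restr_det (frechet_derivative g (at x)) M > \<sigma>1) \<and>
     (\<forall>x (M::real^'s \<Rightarrow> real^'d). tangent_plane Ccs x M \<longrightarrow> restr_det (frechet_derivative g (at x)) M < inverse \<sigma>1)"

text \<open>Bounds as in (C) (with constant s on the points of X) -- used for (C) with
  X = complement of V, s = sigma2 and for (D) with X = V, s = 1 + delta0.\<close>
definition cond_bound :: "'u::finite itself \<Rightarrow> 's::finite itself \<Rightarrow> (real^'d \<Rightarrow> (real^'d) set) \<Rightarrow> (real^'d \<Rightarrow> (real^'d) set) \<Rightarrow> (real^'d) set \<Rightarrow> real \<Rightarrow> (real^'d \<Rightarrow> real^'d) \<Rightarrow> bool" where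
  "cond_bound _ _ Ccu Ccs X s g \<longleftrightarrow>
     (\<forall>x\<in>X. \<forall>M::real^'u \<Rightarrow> real^'d. tangent_plane Ccu x M \<longrightarrow> restr_inv_norm (frechet_derivative g (at x)) (range M) < s) \<and>
     (\<forall>x\<in>X. \<forall>M::real^'s \<Rightarrow> real^'d. tangent_plane Ccs x M \<longrightarrow> restr_norm (frechet_derivative g (at x)) (range M) < s)"

text \<open>Random compositions f^n_t = t_n o ... o t_1; here t 0 plays the role of t_1.\<close>
primrec rcomp :: "(nat \<Rightarrow> ('a \<Rightarrow> 'a)) \<Rightarrow> nat \<Rightarrow> 'a \<Rightarrow> 'a" where
  "rcomp t 0 = id"
| "rcomp t (Suc n) = t n \<circ> rcomp t n"

text \<open>A disk tangent to the cone field C: a C^1 embedding phi of the closed ball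
  cball 0 r of R^k into the torus (injective modulo Z^d) whose tangent planes lie in C.\<close>
definition tangent_disk :: "(real^'d \<Rightarrow> (real^'d) set) \<Rightarrow> (real^'k \<Rightarrow> real^'d) \<Rightarrow> real \<Rightarrow> bool" where
  "tangent_disk C \<phi> r \<longleftrightarrow> r > 0 \<and>
     (\<exists>U D. open U \<and> cball 0 r \<subseteq> U \<and> continuous_on U D \<and>
        (\<forall>s\<in>U. (\<phi> has_derivative blinfun_apply (D s)) (at s))) \<and>
     (\<forall>s\<in>cball 0 r. \<forall>s'\<in>cball 0 r. \<phi> s - \<phi> s' \<in> Zd \<longrightarrow> s = s') \<and>
     (\<forall>s\<in>cball 0 r. tangent_plane C (\<phi> s) (frechet_derivative \<phi> (at s)))"

text \<open>Normalised Lebesgue (k-dimensional volume) measure m on the disk,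
  pulled back to the parameter ball: density jac(D phi) w.r.t. Lebesgue measure.\<close>
definition disk_measure :: "(real^'k \<Rightarrow> real^'d) \<Rightarrow> real \<Rightarrow> (real^'k) measure" where
  "disk_measure \<phi> r =
     (let \<mu> = density (restrict_space lborel (cball 0 r)) (\<lambda>s. ennreal (jac (frechet_derivative \<phi> (at s))))
      in scale_measure (1 / emeasure \<mu> (space \<mu>)) \<mu>)"

text \<open>The sum  sum_{j<n} log ||(D t_{j+1} | T_{f^j_t x} Delta_j(t))^{-1}||  at x = phi s,
  where T Delta_j(t) at f^j_t(phi s) is the image of D(f^j_t o phi)(s).\<close>
definition log_sum :: "(nat \<Rightarrow> (real^'d \<Rightarrow> real^'d)) \<Rightarrow> (real^'k \<Rightarrow> real^'d) \<Rightarrow> nat \<Rightarrow> real^'k \<Rightarrow> real" where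
  "log_sum t \<phi> n s = (\<Sum>j<n. ln (restr_inv_norm (frechet_derivative (t j) (at (rcomp t j (\<phi> s))))
                                   (range (frechet_derivative (\<lambda>s'. rcomp t j (\<phi> s')) (at s)))))"

end

theory Submission
  imports Defs
begin

text \<open>
  Put \<kappa> = exp c. By condition (D) the inverse of Df restricted to a cu-plane has norm below
  \<kappa> everywhere, and by (C) below \<sigma>2 < 1 outside V, in particular on A = B_1 \<union> ... \<union> B_p.
  Summing logarithms along a random orbit gives
    log_sum \<le> n c - (c - ln \<sigma>2) * (number of visits to A before time n),
  which is at most -c n as soon as the orbit visits A at least \<zeta> n times, provided
  2 c = \<zeta> (- ln \<sigma>2). Lemma 7.2 bounds the measure of the points with fewer visits by \<tau>^n,
  which is statement (1). These bounds are summable, so by Borel-Cantelli almost every point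
  eventually visits A at least \<zeta> n times; this gives the limsup bound for every fixed
  sequence of maps, in particular the constant one, and by Fubini for the product measure.
\<close>

section \<open>Gram determinants\<close>

lemma continuous_on_det:
  fixes A :: "'a::topological_space \<Rightarrow> real^'n^'n"
  assumes "\<And>i j. continuous_on S (\<lambda>s. A s $ i $ j)"
  shows "continuous_on S (\<lambda>s. det (A s))"
  unfolding det_def by (intro continuous_intros assms)

lemma continuous_on_jac:
  fixes D :: "'a::topological_space \<Rightarrow> (real^'k) \<Rightarrow>\<^sub>L (real^'d)"
  assumes "continuous_on S D"
  shows "continuous_on S (\<lambda>s. jac (blinfun_apply (D s)))"
  unfolding jac_def matrix_matrix_mult_def transpose_def matrix_def
  by (simp, intro continuous_intros continuous_on_det assms)

lemma det_nonzero_if_kernel_trivial: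
  fixes A :: "real^'n^'n"
  assumes "\<And>x. A *v x = 0 \<Longrightarrow> x = 0"
  shows "det A \<noteq> 0"
  by (meson assms invertible_det_nz invertible_left_inverse matrix_left_invertible_ker)

text \<open>Along the segment from G to the identity the quadratic form stays positive definite,
  so the determinant never vanishes and keeps the sign of det (mat 1) = 1.\<close>
lemma det_pos_if_positive_definite:
  fixes G :: "real^'n^'n"
  assumes pos: "\<And>x. x \<noteq> 0 \<Longrightarrow> x \<bullet> (G *v x) > 0"
  shows "det G > 0"
proof (rule ccontr)
  define A where "A l = (1 - l) *\<^sub>R G + l *\<^sub>R mat 1" for l :: real
  have det_A: "det (A l) \<noteq> 0" if l: "0 \<le> l" "l \<le> 1" for l
  proof (rule det_nonzero_if_kernel_trivial, rule ccontr)
    fix x assume Ax: "A l *v x = 0" and "x \<noteq> 0"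
    have "x \<bullet> (A l *v x) = (1 - l) * (x \<bullet> (G *v x)) + l * (x \<bullet> x)"
      by (simp add: A_def matrix_vector_mult_add_rdistrib inner_add_right
          scaleR_matrix_vector_assoc[symmetric])
    also have "\<dots> > 0"
      using pos[OF \<open>x \<noteq> 0\<close>] \<open>x \<noteq> 0\<close> l
      by (cases "l = 1") (auto intro: add_pos_nonneg)
    finally show False using Ax by simp
  qed
  assume "\<not> det G > 0"
  then have "det (A 0) \<le> 0" by (simp add: A_def)
  moreover have "0 \<le> det (A 1)" by (simp add: A_def)
  moreover have "continuous_on {0..1} (\<lambda>l. det (A l))"
    unfolding A_def by (intro continuous_on_det) (simp, intro continuous_intros)
  ultimately obtain l where "0 \<le> l" "l \<le> 1" "det (A l) = 0"
    using IVT'[of "\<lambda>l. det (A l)" 0 0 1] by auto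
  with det_A show False by blast
qed

lemma jac_pos:
  fixes M :: "real^'k \<Rightarrow> real^'d"
  assumes "linear M" "inj M"
  shows "jac M > 0"
proof -
  have "x \<bullet> ((transpose (matrix M) ** matrix M) *v x) > 0" if "x \<noteq> 0" for x
  proof -
    have "x \<bullet> ((transpose (matrix M) ** matrix M) *v x) = (matrix M *v x) \<bullet> (matrix M *v x)"
      by (simp add: matrix_vector_mul_assoc[symmetric] dot_lmul_matrix[symmetric] inner_commute)
    also have "\<dots> = M x \<bullet> M x"
      by (simp add: matrix_works[OF assms(1)[unfolded linear_matrix_vector_mul_eq[symmetric]]])
    finally have "x \<bullet> ((transpose (matrix M) ** matrix M) *v x) = M x \<bullet> M x" .
    moreover have "M x \<noteq> 0" using assms that by (metis linear_0 injD)
    ultimately show ?thesis by simp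
  qed
  then show ?thesis unfolding jac_def by (simp add: det_pos_if_positive_definite)
qed

section \<open>Restricted inverse norms\<close>

lemma restr_inv_norm_eq_SUP:
  "restr_inv_norm L E = (SUP v\<in>E - {0}. norm v / norm (L v))"
  unfolding restr_inv_norm_def by (rule arg_cong[where f = Sup]) auto

lemma bdd_above_norm_ratio:
  fixes L :: "'a::real_normed_vector \<Rightarrow> 'b::euclidean_space"
  assumes "linear L" "inj L"
  shows "bdd_above ((\<lambda>v. norm v / norm (L v)) ` A)"
proof -
  obtain B where B: "B > 0" "\<And>x. B * norm x \<le> norm (L x)"
    using linear_inj_bounded_below_pos[OF assms] by blast
  have "norm v / norm (L v) \<le> 1 / B" for v
  proof (cases "v = 0")
    case False
    then have "norm (L v) > 0" using B by (metis mult_pos_pos zero_less_norm_iff order_less_le_trans)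
    then show ?thesis using B by (simp add: divide_simps mult.commute)
  qed (use B in simp)
  then show ?thesis by (rule bdd_aboveI2)
qed

lemma restr_inv_norm_pos:
  fixes L :: "real^'d \<Rightarrow> real^'d"
  assumes "linear L" "inj L" "v \<in> E" "v \<noteq> 0"
  shows "restr_inv_norm L E > 0"
proof -
  have "L v \<noteq> 0" using assms by (metis linear_0 injD)
  then have "0 < norm v / norm (L v)" using \<open>v \<noteq> 0\<close> by simp
  also have "\<dots> \<le> restr_inv_norm L E"
    unfolding restr_inv_norm_eq_SUP using assms by (intro cSUP_upper bdd_above_norm_ratio) auto
  finally show ?thesis .
qed

lemma cSUP_inter_dense:
  fixes f :: "'a::topological_space \<Rightarrow> real"
  assumes S: "open S" and f: "continuous_on S f" and bdd: "bdd_above (f ` S)"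
    and D: "\<And>W. open W \<Longrightarrow> W \<noteq> {} \<Longrightarrow> \<exists>d\<in>D. d \<in> W"
  shows "(SUP x\<in>D \<inter> S. f x) = (SUP x\<in>S. f x)"
proof (cases "S = {}")
  case False
  then have ne: "D \<inter> S \<noteq> {}" using D[OF S] by blast
  show ?thesis
  proof (rule antisym)
    show "(SUP x\<in>D \<inter> S. f x) \<le> (SUP x\<in>S. f x)"
      by (rule cSUP_subset_mono) (use ne bdd in auto)
    show "(SUP x\<in>S. f x) \<le> (SUP x\<in>D \<inter> S. f x)"
    proof (rule cSUP_least[OF False], rule ccontr)
      fix x assume "x \<in> S" "\<not> f x \<le> (SUP x\<in>D \<inter> S. f x)"
      then have "x \<in> S \<inter> f -` {(SUP x\<in>D \<inter> S. f x)<..}" by simp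
      moreover have "open (S \<inter> f -` {(SUP x\<in>D \<inter> S. f x)<..})"
        using continuous_open_preimage[OF f S open_greaterThan] .
      ultimately obtain d where d: "d \<in> D \<inter> S" "f d > (SUP x\<in>D \<inter> S. f x)" using D by blast
      moreover have "f d \<le> (SUP x\<in>D \<inter> S. f x)"
        using d bdd by (intro cSUP_upper) (auto elim: bdd_above_mono)
      ultimately show False by simp
    qed
  qed
qed simp

text \<open>The supremum defining restr_inv_norm may be taken over a countable dense set of
  parameters, which makes it a countable supremum of continuous functions.\<close>
lemma borel_measurable_restr_inv_norm:
  fixes L :: "'a::topological_space \<Rightarrow> (real^'d) \<Rightarrow>\<^sub>L (real^'d)"
    and M :: "'a \<Rightarrow> (real^'k) \<Rightarrow>\<^sub>L (real^'d)"
  assumes L: "continuous_on S L" and M: "continuous_on S M"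
    and inj: "\<And>s. s \<in> S \<Longrightarrow> inj (blinfun_apply (L s)) \<and> inj (blinfun_apply (M s))"
  shows "(\<lambda>s. restr_inv_norm (L s) (range (M s))) \<in> borel_measurable (restrict_space borel S)"
proof -
  obtain D :: "(real^'k) set" where D: "countable D" "\<And>W. open W \<Longrightarrow> W \<noteq> {} \<Longrightarrow> \<exists>d\<in>D. d \<in> W"
    using countable_dense_setE by blast
  define F where "F u s = norm (M s u) / norm (L s (M s u))" for u s
  have bdd: "bdd_above ((\<lambda>u. F u s) ` X)" if "s \<in> S" for s X
    using bdd_above_norm_ratio[of "L s" "M s ` X"] inj[OF that]
    by (simp add: F_def image_image bounded_linear.linear[OF blinfun.bounded_linear_right])
  have eq: "restr_inv_norm (L s) (range (M s)) = (SUP u\<in>D - {0}. F u s)" if s: "s \<in> S" for s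
  proof -
    have nonzero: "M s u \<noteq> 0 \<and> L s (M s u) \<noteq> 0" if "u \<noteq> 0" for u
      using inj[OF s] that by (metis blinfun.zero_right injD)
    have "range (M s) - {0} = M s ` (- {0})"
      using nonzero by (auto simp: blinfun.zero_right)
    then have "restr_inv_norm (L s) (range (M s)) = (SUP u\<in>- {0}. F u s)"
      by (simp add: restr_inv_norm_eq_SUP F_def image_image)
    also have "\<dots> = (SUP u\<in>D \<inter> - {0}. F u s)"
    proof (rule cSUP_inter_dense[symmetric, OF _ _ bdd[OF s] D(2)])
      show "continuous_on (- {0}) (\<lambda>u. F u s)"
        unfolding F_def using nonzero by (intro continuous_intros) auto
    qed auto
    finally show ?thesis by (simp add: Diff_eq Int_commute)
  qed
  have "(\<lambda>s. SUP u\<in>D - {0}. F u s) \<in> borel_measurable (restrict_space borel S)"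
  proof (rule borel_measurable_cSUP)
    fix u
    have "continuous_on S (\<lambda>s. norm (M s u))" "continuous_on S (\<lambda>s. norm (L s (M s u)))"
      by (intro continuous_intros L M)+
    then show "F u \<in> borel_measurable (restrict_space borel S)"
      unfolding F_def by (intro borel_measurable_divide borel_measurable_continuous_on_restrict)
  qed (use D(1) bdd in \<open>auto simp: space_restrict_space\<close>)
  then show ?thesis
    by (rule measurable_cong[THEN iffD1, rotated]) (simp add: eq space_restrict_space)
qed

section \<open>Derivatives along random compositions\<close>

lemma continuous_on_rcomp:
  assumes t: "\<And>j. continuous_on UNIV (t j)" and \<phi>: "continuous_on S \<phi>"
  shows "continuous_on S (\<lambda>s. rcomp t j (\<phi> s))"
proof (induction j)
  case (Suc j)
  then show ?case by (simp, rule continuous_on_compose2[OF t]) auto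
qed (simp add: \<phi>)

primrec rcomp_deriv ::
  "(nat \<Rightarrow> 'a::real_normed_vector \<Rightarrow> ('a \<Rightarrow>\<^sub>L 'a)) \<Rightarrow> (nat \<Rightarrow> 'a \<Rightarrow> 'a)
     \<Rightarrow> ('b::real_normed_vector \<Rightarrow> 'a) \<Rightarrow> ('b \<Rightarrow> ('b \<Rightarrow>\<^sub>L 'a))
     \<Rightarrow> nat \<Rightarrow> 'b \<Rightarrow> ('b \<Rightarrow>\<^sub>L 'a)" where
  "rcomp_deriv Dt t \<phi> D\<phi> 0 s = D\<phi> s"
| "rcomp_deriv Dt t \<phi> D\<phi> (Suc j) s = Dt j (rcomp t j (\<phi> s)) o\<^sub>L rcomp_deriv Dt t \<phi> D\<phi> j s"

lemma has_derivative_rcomp: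
  assumes t: "\<And>j x. (t j has_derivative blinfun_apply (Dt j x)) (at x)"
    and \<phi>: "(\<phi> has_derivative blinfun_apply (D\<phi> s)) (at s)"
  shows "((\<lambda>s. rcomp t j (\<phi> s)) has_derivative blinfun_apply (rcomp_deriv Dt t \<phi> D\<phi> j s)) (at s)"
proof (induction j)
  case (Suc j)
  from diff_chain_at[OF Suc t] show ?case by (simp add: o_def)
qed (simp add: \<phi>)

lemma continuous_on_rcomp_deriv:
  assumes t: "\<And>j x. (t j has_derivative blinfun_apply (Dt j x)) (at x)"
    and Dt: "\<And>j. continuous_on UNIV (Dt j)"
    and \<phi>: "\<And>s. s \<in> U \<Longrightarrow> (\<phi> has_derivative blinfun_apply (D\<phi> s)) (at s)"
    and D\<phi>: "continuous_on U D\<phi>"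
  shows "continuous_on U (rcomp_deriv Dt t \<phi> D\<phi> j)"
proof (induction j)
  case (Suc j)
  have "continuous_on U (\<lambda>s. rcomp t j (\<phi> s))"
    using t \<phi> by (intro continuous_on_rcomp continuous_at_imp_continuous_on)
      (auto intro: has_derivative_continuous)
  then have "continuous_on U (\<lambda>s. Dt j (rcomp t j (\<phi> s)))"
    by (rule continuous_on_compose2[OF Dt]) simp
  with Suc show ?case by (simp, intro continuous_intros)
qed (simp add: D\<phi>)

lemma inj_rcomp_deriv:
  assumes "\<And>j x. inj (blinfun_apply (Dt j x))" and "inj (blinfun_apply (D\<phi> s))"
  shows "inj (blinfun_apply (rcomp_deriv Dt t \<phi> D\<phi> j s))"
  by (induction j) (simp_all add: assms inj_compose[unfolded o_def])

lemma tangent_plane_rcomp_deriv: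
  assumes inj: "\<And>j x. inj (blinfun_apply (Dt j x))"
    and cone: "\<And>j x. blinfun_apply (Dt j x) ` C x \<subseteq> C (t j x)"
    and tangent: "tangent_plane C (\<phi> s) (blinfun_apply (D\<phi> s))"
  shows "tangent_plane C (rcomp t j (\<phi> s)) (blinfun_apply (rcomp_deriv Dt t \<phi> D\<phi> j s))"
proof -
  have "range (blinfun_apply (rcomp_deriv Dt t \<phi> D\<phi> j s)) \<subseteq> C (rcomp t j (\<phi> s))"
  proof (induction j)
    case 0 then show ?case using tangent by (simp add: tangent_plane_def)
  next
    case (Suc j) then show ?case using cone by (fastforce simp: image_subset_iff)
  qed
  moreover have "inj (blinfun_apply (rcomp_deriv Dt t \<phi> D\<phi> j s))"
    using inj tangent by (intro inj_rcomp_deriv) (auto simp: tangent_plane_def)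
  ultimately show ?thesis
    by (simp add: tangent_plane_def bounded_linear.linear[OF blinfun.bounded_linear_right])
qed

lemma log_sum_eq_rcomp_deriv:
  assumes t: "\<And>j x. (t j has_derivative blinfun_apply (Dt j x)) (at x)"
    and \<phi>: "(\<phi> has_derivative blinfun_apply (D\<phi> s)) (at s)"
  shows "log_sum t \<phi> n s = (\<Sum>j<n. ln (restr_inv_norm (blinfun_apply (Dt j (rcomp t j (\<phi> s))))
            (range (blinfun_apply (rcomp_deriv Dt t \<phi> D\<phi> j s)))))"
proof -
  have "((\<lambda>s. rcomp t j (\<phi> s)) has_derivative blinfun_apply (rcomp_deriv Dt t \<phi> D\<phi> j s)) (at s)" for j
    by (rule has_derivative_rcomp) (use t \<phi> in auto)
  from frechet_derivative_at[OF this] show ?thesis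
    unfolding log_sum_def by (simp add: frechet_derivative_at[OF t, symmetric])
qed

lemma torus_C2_diffeo_deriv:
  assumes "torus_C2_diffeo g"
  shows "(g has_derivative blinfun_apply (Blinfun (frechet_derivative g (at x)))) (at x)"
    and "continuous_on UNIV (\<lambda>x. Blinfun (frechet_derivative g (at x)))"
    and "inj (blinfun_apply (Blinfun (frechet_derivative g (at x))))"
proof -
  obtain D D2 where "C2_with g D D2" using assms by (auto simp: torus_C2_diffeo_def)
  then have g: "\<And>x. (g has_derivative blinfun_apply (D x)) (at x)"
    and D: "\<And>x. (D has_derivative blinfun_apply (D2 x)) (at x)"
    by (auto simp: C2_with_def)
  have D_eq: "(\<lambda>x. Blinfun (frechet_derivative g (at x))) = D"
    by (rule ext) (simp add: frechet_derivative_at[OF g, symmetric] blinfun_apply_inverse)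
  show "(g has_derivative blinfun_apply (Blinfun (frechet_derivative g (at x)))) (at x)"
    using g D_eq by metis
  show "continuous_on UNIV (\<lambda>x. Blinfun (frechet_derivative g (at x)))"
    unfolding D_eq using D
    by (intro continuous_at_imp_continuous_on) (auto intro: has_derivative_continuous)
  show "inj (blinfun_apply (Blinfun (frechet_derivative g (at x))))"
    using assms D_eq frechet_derivative_at[OF g]
    by (metis bij_is_inj torus_C2_diffeo_def)
qed

lemma torus_C2_diffeo_continuous:
  assumes "torus_C2_diffeo g"
  shows "continuous_on UNIV g"
  using torus_C2_diffeo_deriv(1)[OF assms]
  by (intro continuous_at_imp_continuous_on) (auto intro: has_derivative_continuous)

lemma tangent_diskE:
  assumes "tangent_disk C \<phi> r"
  obtains U D\<phi> where "open U" "cball 0 r \<subseteq> U" "continuous_on U D\<phi>"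
    "\<And>s. s \<in> U \<Longrightarrow> (\<phi> has_derivative blinfun_apply (D\<phi> s)) (at s)"
    "\<And>s. s \<in> cball 0 r \<Longrightarrow> tangent_plane C (\<phi> s) (blinfun_apply (D\<phi> s))"
proof -
  obtain U D where U: "open U" "cball 0 r \<subseteq> U" "continuous_on U D"
    and D: "\<And>s. s \<in> U \<Longrightarrow> (\<phi> has_derivative blinfun_apply (D s)) (at s)"
    using assms unfolding tangent_disk_def by blast
  moreover have "tangent_plane C (\<phi> s) (blinfun_apply (D s))" if "s \<in> cball 0 r" for s
    using assms that U(2) frechet_derivative_at[OF D, of s] by (auto simp: tangent_disk_def)
  ultimately show ?thesis using that by blast
qed

lemma continuous_on_tangent_disk:
  assumes "tangent_disk C \<phi> r"
  shows "continuous_on (cball 0 r) \<phi>"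
proof -
  obtain U D\<phi> where "cball 0 r \<subseteq> U" "\<And>s. s \<in> U \<Longrightarrow> (\<phi> has_derivative blinfun_apply (D\<phi> s)) (at s)"
    using assms by (elim tangent_diskE) blast
  then show ?thesis
    by (intro continuous_at_imp_continuous_on) (auto intro: has_derivative_continuous)
qed

section \<open>The normalised measure on a disk\<close>

lemma set_nn_integral_continuous_pos_finite:
  fixes g :: "'a::euclidean_space \<Rightarrow> real"
  assumes K: "compact K" "emeasure lborel K > 0"
    and g: "continuous_on K g" "\<And>x. x \<in> K \<Longrightarrow> g x > 0"
  shows "0 < (\<integral>\<^sup>+x\<in>K. ennreal (g x) \<partial>lborel)" and "(\<integral>\<^sup>+x\<in>K. ennreal (g x) \<partial>lborel) < \<infinity>"
proof -
  have "K \<noteq> {}" using K(2) by auto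
  obtain a where a: "a \<in> K" "\<And>x. x \<in> K \<Longrightarrow> g a \<le> g x"
    using continuous_attains_inf[OF K(1) \<open>K \<noteq> {}\<close> g(1)] by blast
  obtain b where "\<And>x. x \<in> K \<Longrightarrow> g x \<le> b"
    using continuous_attains_sup[OF K(1) \<open>K \<noteq> {}\<close> g(1)] by blast
  have K_sets: "K \<in> sets lborel" using K(1) by (simp add: compact_imp_closed borel_closed)
  have "0 < ennreal (g a) * emeasure lborel K"
    using g(2)[OF a(1)] K(2) by (simp add: ennreal_zero_less_mult_iff)
  also have "\<dots> = (\<integral>\<^sup>+x\<in>K. ennreal (g a) \<partial>lborel)"
    using K_sets by (simp add: nn_integral_cmult_indicator)
  also have "\<dots> \<le> (\<integral>\<^sup>+x\<in>K. ennreal (g x) \<partial>lborel)"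
    using a by (intro nn_integral_mono) (auto simp: indicator_def intro: ennreal_leI)
  finally show "0 < (\<integral>\<^sup>+x\<in>K. ennreal (g x) \<partial>lborel)" .
  have "(\<integral>\<^sup>+x\<in>K. ennreal (g x) \<partial>lborel) \<le> (\<integral>\<^sup>+x\<in>K. ennreal b \<partial>lborel)"
    using \<open>\<And>x. x \<in> K \<Longrightarrow> g x \<le> b\<close>
    by (intro nn_integral_mono) (auto simp: indicator_def intro: ennreal_leI)
  also have "\<dots> = ennreal b * emeasure lborel K"
    using K_sets by (simp add: nn_integral_cmult_indicator)
  also have "\<dots> < \<infinity>"
    using emeasure_compact_finite[OF K(1)] by (simp add: ennreal_mult_less_top)
  finally show "(\<integral>\<^sup>+x\<in>K. ennreal (g x) \<partial>lborel) < \<infinity>" .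
qed

lemma space_disk_measure [simp]: "space (disk_measure \<phi> r) = cball 0 r"
  unfolding disk_measure_def Let_def space_scale_measure space_density by (simp add: space_restrict_space)

lemma sets_disk_measure [measurable_cong]:
  "sets (disk_measure \<phi> r) = sets (restrict_space borel (cball 0 r))"
  unfolding disk_measure_def Let_def sets_scale_measure sets_density
  by (rule sets_restrict_space_cong) simp

lemma prob_space_disk_measure:
  fixes \<phi> :: "real^'k \<Rightarrow> real^'d"
  assumes "tangent_disk C \<phi> r"
  shows "prob_space (disk_measure \<phi> r)"
proof
  obtain U D\<phi> where U: "open U" "cball 0 r \<subseteq> U" "continuous_on U D\<phi>"
    and \<phi>: "\<And>s. s \<in> U \<Longrightarrow> (\<phi> has_derivative blinfun_apply (D\<phi> s)) (at s)"
    and tangent: "\<And>s. s \<in> cball 0 r \<Longrightarrow> tangent_plane C (\<phi> s) (blinfun_apply (D\<phi> s))"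
    using tangent_diskE[OF assms] by blast
  have "r > 0" using assms by (simp add: tangent_disk_def)
  define J where "J s = jac (frechet_derivative \<phi> (at s))" for s
  define \<mu> where "\<mu> = density (restrict_space lborel (cball 0 r)) (\<lambda>s. ennreal (J s))"
  have J: "J s = jac (blinfun_apply (D\<phi> s))" if "s \<in> cball 0 r" for s
    using frechet_derivative_at[OF \<phi>] U(2) that by (auto simp: J_def)
  have J_cont: "continuous_on (cball 0 r) J"
    using continuous_on_jac[OF continuous_on_subset[OF U(3,2)]]
    by (rule continuous_on_cong[THEN iffD2, rotated 2]) (simp_all add: J)
  have J_pos: "J s > 0" if "s \<in> cball 0 r" for s
    using tangent[OF that] J[OF that] by (simp add: tangent_plane_def jac_pos)
  have "(\<lambda>s. ennreal (J s)) \<in> borel_measurable (restrict_space lborel (cball 0 r))"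
    using borel_measurable_continuous_on_restrict[OF J_cont]
    by (simp add: measurable_cong_sets[OF sets_restrict_space_cong[OF sets_lborel] refl])
  then have "emeasure \<mu> (space \<mu>)
      = (\<integral>\<^sup>+s. ennreal (J s) * indicator (cball 0 r) s \<partial>restrict_space lborel (cball 0 r))"
    using sets.top[of "restrict_space lborel (cball 0 r)"] unfolding \<mu>_def
    by (subst emeasure_density) (auto simp: space_restrict_space)
  also have "\<dots> = (\<integral>\<^sup>+s\<in>cball 0 r. ennreal (J s) \<partial>lborel)"
    by (subst nn_integral_restrict_space) (auto intro!: nn_integral_cong split: split_indicator)
  finally have "emeasure \<mu> (space \<mu>) = (\<integral>\<^sup>+s\<in>cball 0 r. ennreal (J s) \<partial>lborel)" .
  moreover have "emeasure lborel (cball (0::real^'k) r) > 0"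
    using \<open>r > 0\<close> by (simp add: emeasure_cball)
  ultimately have "0 < emeasure \<mu> (space \<mu>)" "emeasure \<mu> (space \<mu>) < \<infinity>"
    using set_nn_integral_continuous_pos_finite[OF compact_cball _ J_cont J_pos] by simp_all
  moreover have "disk_measure \<phi> r = scale_measure (1 / emeasure \<mu> (space \<mu>)) \<mu>"
    unfolding disk_measure_def Let_def \<mu>_def J_def ..
  ultimately show "emeasure (disk_measure \<phi> r) (space (disk_measure \<phi> r)) = 1"
    by (simp add: space_scale_measure ennreal_divide_times)
qed

lemma borel_measurable_disk_measure_continuous:
  assumes "continuous_on (cball 0 r) g"
  shows "g \<in> borel_measurable (disk_measure \<phi> r)"
  using borel_measurable_continuous_on_restrict[OF assms]
  by (simp add: measurable_cong_sets[OF sets_disk_measure refl])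

lemma borel_measurable_log_sum:
  fixes \<phi> :: "real^'k \<Rightarrow> real^'d"
  assumes "tangent_disk C \<phi> r" and "\<And>j. torus_C2_diffeo (t j)"
  shows "log_sum t \<phi> n \<in> borel_measurable (disk_measure \<phi> r)"
proof -
  obtain U D\<phi> where U: "open U" "cball 0 r \<subseteq> U" "continuous_on U D\<phi>"
    and \<phi>: "\<And>s. s \<in> U \<Longrightarrow> (\<phi> has_derivative blinfun_apply (D\<phi> s)) (at s)"
    and tangent: "\<And>s. s \<in> cball 0 r \<Longrightarrow> tangent_plane C (\<phi> s) (blinfun_apply (D\<phi> s))"
    using tangent_diskE[OF assms(1)] by blast
  define Dt where "Dt j x = Blinfun (frechet_derivative (t j) (at x))" for j x
  have t: "\<And>j x. (t j has_derivative blinfun_apply (Dt j x)) (at x)"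
    and Dt: "\<And>j. continuous_on UNIV (Dt j)" "\<And>j x. inj (blinfun_apply (Dt j x))"
    using torus_C2_diffeo_deriv[OF assms(2)] by (simp_all add: Dt_def)
  define M where "M j = rcomp_deriv Dt t \<phi> D\<phi> j" for j
  have "continuous_on (cball 0 r) (\<lambda>s. rcomp t j (\<phi> s))" for j
    using torus_C2_diffeo_continuous[OF assms(2)] continuous_on_tangent_disk[OF assms(1)]
    by (rule continuous_on_rcomp)
  then have L: "continuous_on (cball 0 r) (\<lambda>s. Dt j (rcomp t j (\<phi> s)))" for j
    by (rule continuous_on_compose2[OF Dt(1)]) simp
  have M: "continuous_on (cball 0 r) (M j)" for j
    unfolding M_def using continuous_on_rcomp_deriv[OF t Dt(1) \<phi> U(3)] U(2)
    by (rule continuous_on_subset)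
  have inj_M: "inj (blinfun_apply (M j s))" if "s \<in> cball 0 r" for j s
    unfolding M_def using Dt(2) tangent[OF that]
    by (intro inj_rcomp_deriv) (simp_all add: tangent_plane_def)
  have "(\<lambda>s. \<Sum>j<n. ln (restr_inv_norm (blinfun_apply (Dt j (rcomp t j (\<phi> s)))) (range (blinfun_apply (M j s)))))
      \<in> borel_measurable (restrict_space borel (cball 0 r))"
    by (intro borel_measurable_sum borel_measurable_ln borel_measurable_restr_inv_norm L M)
      (simp_all add: Dt(2) inj_M)
  moreover have "log_sum t \<phi> n s
      = (\<Sum>j<n. ln (restr_inv_norm (blinfun_apply (Dt j (rcomp t j (\<phi> s)))) (range (blinfun_apply (M j s)))))"
    if "s \<in> cball 0 r" for s
    unfolding M_def using that U(2) by (intro log_sum_eq_rcomp_deriv[OF t \<phi>]) auto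
  ultimately have "log_sum t \<phi> n \<in> borel_measurable (restrict_space borel (cball 0 r))"
    by (subst measurable_cong) (auto simp: space_restrict_space)
  then show ?thesis
    by (simp add: measurable_cong_sets[OF sets_disk_measure refl])
qed

lemma borel_measurable_tangent_disk:
  assumes "tangent_disk C \<phi> r"
  shows "\<phi> \<in> borel_measurable (disk_measure \<phi> r)"
  using continuous_on_tangent_disk[OF assms] by (rule borel_measurable_disk_measure_continuous)

lemma borel_measurable_rcomp_disk:
  assumes "tangent_disk C \<phi> r" and "\<And>j. torus_C2_diffeo (t j)"
  shows "(\<lambda>s. rcomp t j (\<phi> s)) \<in> borel_measurable (disk_measure \<phi> r)"
  using torus_C2_diffeo_continuous[OF assms(2)] continuous_on_tangent_disk[OF assms(1)]
  by (intro borel_measurable_disk_measure_continuous continuous_on_rcomp)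

lemma measurable_rcomp_pair:
  assumes eval: "(\<lambda>(g, x). g x) \<in> borel_measurable (\<theta> \<Otimes>\<^sub>M borel)"
    and \<phi>: "\<phi> \<in> borel_measurable N"
  shows "(\<lambda>z. rcomp (fst z) j (\<phi> (snd z))) \<in> borel_measurable (PiM UNIV (\<lambda>_. \<theta>) \<Otimes>\<^sub>M N)"
proof (induction j)
  case 0
  show ?case using measurable_compose[OF measurable_snd \<phi>] by (simp add: o_def)
next
  case (Suc j)
  have "(\<lambda>z. fst z j) \<in> measurable (PiM UNIV (\<lambda>_. \<theta>) \<Otimes>\<^sub>M N) \<theta>"
    using measurable_compose[OF measurable_fst measurable_component_singleton[of j UNIV]] by simp
  with Suc have "(\<lambda>z. (fst z j, rcomp (fst z) j (\<phi> (snd z))))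
      \<in> measurable (PiM UNIV (\<lambda>_. \<theta>) \<Otimes>\<^sub>M N) (\<theta> \<Otimes>\<^sub>M borel)"
    by (intro measurable_Pair)
  from measurable_compose[OF this eval] show ?case by simp
qed

section \<open>Visits and the pathwise estimate\<close>

definition visits :: "(nat \<Rightarrow> 'a \<Rightarrow> 'a) \<Rightarrow> 'a set \<Rightarrow> nat \<Rightarrow> 'a \<Rightarrow> nat" where
  "visits t A n x = card {j. j < n \<and> rcomp t j x \<in> A}"

lemma visits_eq_sum_indicator: "real (visits t A n x) = (\<Sum>j<n. indicator A (rcomp t j x))"
proof -
  have "(\<Sum>j<n. indicator A (rcomp t j x)) = (\<Sum>j\<in>{j. j < n \<and> rcomp t j x \<in> A}. 1 :: real)"
    by (rule sum.mono_neutral_cong_right) (auto simp: indicator_def)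
  then show ?thesis by (simp add: visits_def)
qed

lemma borel_measurable_visits:
  assumes "\<And>j. (\<lambda>x. rcomp (t x) j (g x)) \<in> borel_measurable M" and "A \<in> sets borel"
  shows "(\<lambda>x. real (visits (t x) A n (g x))) \<in> borel_measurable M"
proof -
  note assms [measurable]
  show ?thesis unfolding visits_eq_sum_indicator by measurable
qed

lemma ln_restr_inv_norm_le:
  fixes M :: "real^'u \<Rightarrow> real^'d" and uu :: "'u itself" and ss :: "'s::finite itself"
  assumes outside: "cond_bound uu ss Ccu Ccs (- V) \<sigma>2 g" and inside: "cond_bound uu ss Ccu Ccs V \<kappa> g"
    and g: "torus_C2_diffeo g" and M: "tangent_plane Ccu y M"
    and A: "A \<inter> V = {}" and \<sigma>2: "0 < \<sigma>2" "\<sigma>2 \<le> \<kappa>"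
  shows "ln (restr_inv_norm (frechet_derivative g (at y)) (range M))
    \<le> ln \<kappa> - (ln \<kappa> - ln \<sigma>2) * indicator A y"
proof -
  let ?R = "restr_inv_norm (frechet_derivative g (at y)) (range M)"
  have Dg: "blinfun_apply (Blinfun (frechet_derivative g (at y))) = frechet_derivative g (at y)"
    using frechet_derivative_at[OF torus_C2_diffeo_deriv(1)[OF g]] by simp
  have "linear (frechet_derivative g (at y))" "inj (frechet_derivative g (at y))"
    using bounded_linear.linear[OF blinfun.bounded_linear_right] torus_C2_diffeo_deriv(3)[OF g]
    by (metis Dg)+
  moreover obtain u :: "real^'u" where "u \<noteq> 0"
    by (metis vec_eq_iff zero_index zero_neq_one vec_component)
  then have "M u \<noteq> 0" using M by (metis linear_0 injD tangent_plane_def)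
  ultimately have pos: "?R > 0" by (intro restr_inv_norm_pos) auto
  have below_\<kappa>: "?R < \<kappa>"
    using inside outside M \<sigma>2 unfolding cond_bound_def by (cases "y \<in> V") force+
  show ?thesis
  proof (cases "y \<in> A")
    case True
    then have "?R < \<sigma>2" using outside M A unfolding cond_bound_def by blast
    then show ?thesis using True pos \<sigma>2 by simp
  next
    case False
    then show ?thesis using pos below_\<kappa> by simp
  qed
qed

lemma log_sum_le_visits:
  fixes \<phi> :: "real^'u \<Rightarrow> real^'d" and uu :: "'u itself" and ss :: "'s::finite itself"
  assumes diffeo: "\<And>j. torus_C2_diffeo (t j)" and cone: "\<And>j. cond_A Ccu Ccs (t j)"
    and outside: "\<And>j. cond_bound uu ss Ccu Ccs (- V) \<sigma>2 (t j)"
    and inside: "\<And>j. cond_bound uu ss Ccu Ccs V \<kappa> (t j)"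
    and td: "tangent_disk Ccu \<phi> r" and s: "s \<in> cball 0 r"
    and A: "A \<inter> V = {}" and \<sigma>2: "0 < \<sigma>2" "\<sigma>2 \<le> \<kappa>"
  shows "log_sum t \<phi> n s \<le> real n * ln \<kappa> - (ln \<kappa> - ln \<sigma>2) * real (visits t A n (\<phi> s))"
proof -
  obtain U D\<phi> where U: "open U" "cball 0 r \<subseteq> U" "continuous_on U D\<phi>"
    and \<phi>: "\<And>s. s \<in> U \<Longrightarrow> (\<phi> has_derivative blinfun_apply (D\<phi> s)) (at s)"
    and tangent: "\<And>s. s \<in> cball 0 r \<Longrightarrow> tangent_plane Ccu (\<phi> s) (blinfun_apply (D\<phi> s))"
    using tangent_diskE[OF td] by blast
  define Dt where "Dt j x = Blinfun (frechet_derivative (t j) (at x))" for j x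
  have t: "\<And>j x. (t j has_derivative blinfun_apply (Dt j x)) (at x)"
    and Dt: "\<And>j x. inj (blinfun_apply (Dt j x))"
    using torus_C2_diffeo_deriv[OF diffeo] by (simp_all add: Dt_def)
  have Dt_eq: "blinfun_apply (Dt j x) = frechet_derivative (t j) (at x)" for j x
    using frechet_derivative_at[OF t] by simp
  have Dt_cone: "blinfun_apply (Dt j x) ` Ccu x \<subseteq> Ccu (t j x)" for j x
    using cone[of j] by (simp add: Dt_eq cond_A_def)
  have tangent_j: "tangent_plane Ccu (rcomp t j (\<phi> s)) (blinfun_apply (rcomp_deriv Dt t \<phi> D\<phi> j s))" for j
    by (rule tangent_plane_rcomp_deriv) (use Dt Dt_cone tangent[OF s] in auto)
  have "log_sum t \<phi> n s = (\<Sum>j<n. ln (restr_inv_norm (blinfun_apply (Dt j (rcomp t j (\<phi> s))))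
      (range (blinfun_apply (rcomp_deriv Dt t \<phi> D\<phi> j s)))))"
    using s U(2) by (intro log_sum_eq_rcomp_deriv t \<phi>) auto
  also have "\<dots> = (\<Sum>j<n. ln (restr_inv_norm (frechet_derivative (t j) (at (rcomp t j (\<phi> s))))
      (range (blinfun_apply (rcomp_deriv Dt t \<phi> D\<phi> j s)))))"
    by (simp add: Dt_eq)
  also have "\<dots> \<le> (\<Sum>j<n. ln \<kappa> - (ln \<kappa> - ln \<sigma>2) * indicator A (rcomp t j (\<phi> s)))"
    using outside inside diffeo tangent_j A \<sigma>2 by (intro sum_mono ln_restr_inv_norm_le)
  also have "\<dots> = real n * ln \<kappa> - (ln \<kappa> - ln \<sigma>2) * real (visits t A n (\<phi> s))"
    by (simp add: visits_eq_sum_indicator sum_subtractf sum_distrib_left)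
  finally show ?thesis .
qed

section \<open>Borel-Cantelli and Fubini\<close>

lemma limsup_div_le_if_eventually_le:
  fixes a :: "nat \<Rightarrow> real"
  assumes "eventually (\<lambda>n. a n \<le> b * real n) sequentially"
  shows "limsup (\<lambda>n. ereal (a n / real n)) \<le> ereal b"
proof (rule Limsup_bounded)
  show "eventually (\<lambda>n. ereal (a n / real n) \<le> ereal b) sequentially"
    using assms eventually_gt_at_top[of 0] by eventually_elim (simp add: pos_divide_le_eq)
qed

lemma (in prob_space) AE_eventually_notin_if_geometric:
  assumes A: "\<And>n. A n \<in> events" and \<tau>: "0 \<le> \<tau>" "\<tau> < 1"
    and bound: "\<exists>N. \<forall>n\<ge>N. prob (A n) \<le> \<tau> ^ n"
  shows "AE x in M. eventually (\<lambda>n. x \<notin> A n) sequentially"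
proof -
  obtain N where N: "\<And>n. n \<ge> N \<Longrightarrow> prob (A n) \<le> \<tau> ^ n" using bound by blast
  have "summable (\<lambda>n. prob (A n))"
    by (rule summable_comparison_test'[where g = "\<lambda>n. \<tau> ^ n" and N = N])
      (use \<tau> N in \<open>auto intro: summable_geometric\<close>)
  then have "AE x in M. eventually (\<lambda>n. x \<in> space M - A n) sequentially"
    using A by (intro borel_cantelli_AE1) (auto simp: less_top[symmetric])
  then show ?thesis by eventually_elim (auto elim: eventually_mono)
qed

lemma events_low_visits:
  fixes \<phi> :: "real^'k \<Rightarrow> real^'d"
  assumes td: "tangent_disk C \<phi> r" and t: "\<And>j. torus_C2_diffeo (t j)" and A: "A \<in> sets borel"
  shows "{s \<in> cball 0 r. real (visits t A n (\<phi> s)) < \<zeta> * real n} \<in> sets (disk_measure \<phi> r)"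
proof -
  have [measurable]: "(\<lambda>s. real (visits t A n (\<phi> s))) \<in> borel_measurable (disk_measure \<phi> r)"
    using borel_measurable_rcomp_disk[OF td t] A by (rule borel_measurable_visits[where t = "\<lambda>_. t"])
  have "{s \<in> space (disk_measure \<phi> r). real (visits t A n (\<phi> s)) < \<zeta> * real n} \<in> sets (disk_measure \<phi> r)"
    by measurable
  then show ?thesis by simp
qed

lemma measure_log_sum_le_ge:
  fixes \<phi> :: "real^'k \<Rightarrow> real^'d"
  assumes td: "tangent_disk C \<phi> r" and t: "\<And>j. torus_C2_diffeo (t j)" and A: "A \<in> sets borel"
    and key: "\<And>s. s \<in> cball 0 r \<Longrightarrow> \<zeta> * real n \<le> real (visits t A n (\<phi> s)) \<Longrightarrow> log_sum t \<phi> n s \<le> b"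
    and rare: "measure (disk_measure \<phi> r) {s \<in> cball 0 r. real (visits t A n (\<phi> s)) < \<zeta> * real n} \<le> \<epsilon>"
  shows "1 - \<epsilon> \<le> measure (disk_measure \<phi> r) {s \<in> cball 0 r. log_sum t \<phi> n s \<le> b}"
proof -
  interpret prob_space "disk_measure \<phi> r" by (rule prob_space_disk_measure[OF td])
  let ?low = "{s \<in> cball 0 r. real (visits t A n (\<phi> s)) < \<zeta> * real n}"
  have low: "?low \<in> events" by (rule events_low_visits[OF td t A])
  have [measurable]: "log_sum t \<phi> n \<in> borel_measurable (disk_measure \<phi> r)"
    by (rule borel_measurable_log_sum[OF td t])
  have "{s \<in> space (disk_measure \<phi> r). log_sum t \<phi> n s \<le> b} \<in> events" by measurable
  then have good: "{s \<in> cball 0 r. log_sum t \<phi> n s \<le> b} \<in> events" by simp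
  have "1 - \<epsilon> \<le> 1 - prob ?low" using rare by simp
  also have "\<dots> = prob (space (disk_measure \<phi> r) - ?low)" using prob_compl[OF low] by simp
  also have "\<dots> \<le> prob {s \<in> cball 0 r. log_sum t \<phi> n s \<le> b}"
    using key good by (intro finite_measure_mono) (auto simp: not_less)
  finally show ?thesis .
qed

lemma AE_eventually_frequent_visits:
  fixes \<phi> :: "real^'k \<Rightarrow> real^'d"
  assumes td: "tangent_disk C \<phi> r" and t: "\<And>j. torus_C2_diffeo (t j)" and A: "A \<in> sets borel"
    and \<tau>: "0 \<le> \<tau>" "\<tau> < 1"
    and rare: "\<exists>N. \<forall>n\<ge>N. measure (disk_measure \<phi> r)
      {s \<in> cball 0 r. real (visits t A n (\<phi> s)) < \<zeta> * real n} \<le> \<tau> ^ n"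
  shows "AE s in disk_measure \<phi> r. eventually (\<lambda>n. \<zeta> * real n \<le> real (visits t A n (\<phi> s))) sequentially"
proof -
  interpret prob_space "disk_measure \<phi> r" by (rule prob_space_disk_measure[OF td])
  have "AE s in disk_measure \<phi> r.
      eventually (\<lambda>n. s \<notin> {s \<in> cball 0 r. real (visits t A n (\<phi> s)) < \<zeta> * real n}) sequentially"
    using events_low_visits[OF td t A] \<tau> rare by (rule AE_eventually_notin_if_geometric)
  with AE_space show ?thesis by eventually_elim (auto elim: eventually_mono)
qed

lemma AE_pair_eventually_frequent_visits:
  fixes \<phi> :: "real^'k \<Rightarrow> real^'d" and \<theta> :: "(real^'d \<Rightarrow> real^'d) measure"
  assumes \<theta>: "prob_space \<theta>" "space \<theta> = T" and eval: "(\<lambda>(g, x). g x) \<in> borel_measurable (\<theta> \<Otimes>\<^sub>M borel)"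
    and T: "\<And>g. g \<in> T \<Longrightarrow> torus_C2_diffeo g" and td: "tangent_disk C \<phi> r" and A: "A \<in> sets borel"
    and \<tau>: "0 \<le> \<tau>" "\<tau> < 1"
    and rare: "\<And>t. (\<forall>j. t j \<in> T) \<Longrightarrow> \<exists>N. \<forall>n\<ge>N. measure (disk_measure \<phi> r)
      {s \<in> cball 0 r. real (visits t A n (\<phi> s)) < \<zeta> * real n} \<le> \<tau> ^ n"
  shows "AE (t, s) in PiM UNIV (\<lambda>_. \<theta>) \<Otimes>\<^sub>M disk_measure \<phi> r.
    eventually (\<lambda>n. \<zeta> * real n \<le> real (visits t A n (\<phi> s))) sequentially"
proof -
  let ?\<Theta> = "PiM UNIV (\<lambda>_::nat. \<theta>)"
  have "prob_space ?\<Theta>" using \<theta>(1) by (intro prob_space_PiM) auto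
  then interpret pair_sigma_finite ?\<Theta> "disk_measure \<phi> r"
    using prob_space_disk_measure[OF td]
    by (simp add: pair_sigma_finite_def prob_space_imp_sigma_finite)
  have [measurable]: "(\<lambda>z. real (visits (fst z) A n (\<phi> (snd z)))) \<in> borel_measurable (?\<Theta> \<Otimes>\<^sub>M disk_measure \<phi> r)" for n
    using measurable_rcomp_pair[OF eval borel_measurable_tangent_disk[OF td]] A
    by (rule borel_measurable_visits)
  have "{z \<in> space (?\<Theta> \<Otimes>\<^sub>M disk_measure \<phi> r).
      eventually (\<lambda>n. \<zeta> * real n \<le> real (visits (fst z) A n (\<phi> (snd z)))) sequentially}
    \<in> sets (?\<Theta> \<Otimes>\<^sub>M disk_measure \<phi> r)"
    unfolding eventually_sequentially by measurable
  moreover have "AE t in ?\<Theta>. AE s in disk_measure \<phi> r.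
      eventually (\<lambda>n. \<zeta> * real n \<le> real (visits t A n (\<phi> s))) sequentially"
  proof (rule AE_I2)
    fix t assume "t \<in> space ?\<Theta>"
    then have "\<forall>j. t j \<in> T" using \<theta>(2) by (auto simp: space_PiM)
    then show "AE s in disk_measure \<phi> r. eventually (\<lambda>n. \<zeta> * real n \<le> real (visits t A n (\<phi> s))) sequentially"
      using T td A \<tau> rare by (intro AE_eventually_frequent_visits) auto
  qed
  ultimately show ?thesis by (simp add: AE_pair_measure case_prod_beta)
qed

lemma log_sum_le_if_frequent_visits:
  fixes \<phi> :: "real^'u \<Rightarrow> real^'d" and uu :: "'u itself" and ss :: "'s::finite itself"
  assumes diffeo: "\<And>j. torus_C2_diffeo (t j)" and cone: "\<And>j. cond_A Ccu Ccs (t j)"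
    and outside: "\<And>j. cond_bound uu ss Ccu Ccs (- V) \<sigma>2 (t j)"
    and inside: "\<And>j. cond_bound uu ss Ccu Ccs V (exp c) (t j)"
    and td: "tangent_disk Ccu \<phi> r" and s: "s \<in> cball 0 r" and A: "A \<inter> V = {}"
    and \<sigma>2: "0 < \<sigma>2" "\<sigma>2 < 1" and \<zeta>: "\<zeta> > 0" and c: "2 * c = \<zeta> * - ln \<sigma>2"
    and frequent: "\<zeta> * real n \<le> real (visits t A n (\<phi> s))"
  shows "log_sum t \<phi> n s \<le> - c * real n"
proof -
  have ln_\<sigma>2: "ln \<sigma>2 < 0" using \<sigma>2 by simp
  have \<zeta>_ln: "\<zeta> * ln \<sigma>2 = - (2 * c)" using c by simp
  have c_pos: "c > 0" using \<zeta>_ln mult_pos_neg[OF \<zeta> ln_\<sigma>2] by simp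
  have "\<sigma>2 \<le> exp c" using \<sigma>2(2) c_pos exp_ge_add_one_self[of c] by linarith
  then have "log_sum t \<phi> n s \<le> real n * c - (c - ln \<sigma>2) * real (visits t A n (\<phi> s))"
    using log_sum_le_visits[OF diffeo cone outside inside td s A \<sigma>2(1)] by simp
  also have "\<dots> \<le> real n * c - (c - ln \<sigma>2) * (\<zeta> * real n)"
    using frequent ln_\<sigma>2 c_pos by (intro diff_left_mono mult_left_mono) auto
  also have "\<dots> = real n * c - \<zeta> * c * real n + (\<zeta> * ln \<sigma>2) * real n"
    by (simp add: algebra_simps)
  also have "\<dots> = - c * real n - \<zeta> * c * real n"
    unfolding \<zeta>_ln by (simp add: algebra_simps)
  also have "\<dots> \<le> - c * real n" using \<zeta> c_pos by simp
  finally show ?thesis .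
qed

lemma log_sum_bounds_on_disk:
  fixes \<phi> :: "real^'u \<Rightarrow> real^'d" and \<theta> :: "(real^'d \<Rightarrow> real^'d) measure"
    and uu :: "'u itself" and ss :: "'s::finite itself"
  assumes T: "\<And>g. g \<in> T \<Longrightarrow> torus_C2_diffeo g \<and> cond_A Ccu Ccs g \<and>
      cond_bound uu ss Ccu Ccs (- V) \<sigma>2 g \<and> cond_bound uu ss Ccu Ccs V (exp c) g"
    and f: "f \<in> T" and \<theta>: "prob_space \<theta>" "space \<theta> = T"
    and eval: "(\<lambda>(g, x). g x) \<in> borel_measurable (\<theta> \<Otimes>\<^sub>M borel)"
    and td: "tangent_disk Ccu \<phi> r" and A: "A \<in> sets borel" "A \<inter> V = {}"
    and \<sigma>2: "0 < \<sigma>2" "\<sigma>2 < 1" and \<zeta>: "\<zeta> > 0" and c: "2 * c = \<zeta> * - ln \<sigma>2"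
    and \<tau>: "0 \<le> \<tau>" "\<tau> < 1"
    and rare: "\<And>t. (\<forall>j. t j \<in> T) \<Longrightarrow> \<exists>N. \<forall>n\<ge>N. measure (disk_measure \<phi> r)
      {s \<in> cball 0 r. real (visits t A n (\<phi> s)) < \<zeta> * real n} \<le> \<tau> ^ n"
  shows "(\<forall>t. (\<forall>j. t j \<in> T) \<longrightarrow> (\<exists>N. \<forall>n\<ge>N.
           measure (disk_measure \<phi> r) {s \<in> cball 0 r. log_sum t \<phi> n s \<le> - c * real n} \<ge> 1 - \<tau> ^ n)) \<and>
        (AE (t, s) in PiM UNIV (\<lambda>_. \<theta>) \<Otimes>\<^sub>M disk_measure \<phi> r.
           limsup (\<lambda>n. ereal (log_sum t \<phi> n s / real n)) \<le> ereal (- c)) \<and>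
        (AE s in disk_measure \<phi> r. limsup (\<lambda>n. ereal (log_sum (\<lambda>_. f) \<phi> n s / real n)) \<le> ereal (- c))"
proof -
  have key: "log_sum t \<phi> n s \<le> - c * real n"
    if "\<forall>j. t j \<in> T" "s \<in> cball 0 r" "\<zeta> * real n \<le> real (visits t A n (\<phi> s))" for t s n
    using that T td A(2) \<sigma>2 \<zeta> c by (intro log_sum_le_if_frequent_visits) auto
  then have limsup: "limsup (\<lambda>n. ereal (log_sum t \<phi> n s / real n)) \<le> ereal (- c)"
    if "\<forall>j. t j \<in> T" "s \<in> cball 0 r"
      "eventually (\<lambda>n. \<zeta> * real n \<le> real (visits t A n (\<phi> s))) sequentially" for t s
    using that by (intro limsup_div_le_if_eventually_le) (auto elim: eventually_mono)
  show ?thesis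
  proof (intro conjI allI impI)
    fix t :: "nat \<Rightarrow> real^'d \<Rightarrow> real^'d" assume t: "\<forall>j. t j \<in> T"
    then obtain N where "\<forall>n\<ge>N. measure (disk_measure \<phi> r)
        {s \<in> cball 0 r. real (visits t A n (\<phi> s)) < \<zeta> * real n} \<le> \<tau> ^ n"
      using rare by blast
    moreover have "\<And>j. torus_C2_diffeo (t j)" using T t by blast
    ultimately show "\<exists>N. \<forall>n\<ge>N.
        measure (disk_measure \<phi> r) {s \<in> cball 0 r. log_sum t \<phi> n s \<le> - c * real n} \<ge> 1 - \<tau> ^ n"
      using key[OF t] by (intro exI[of _ N] allI impI measure_log_sum_le_ge[OF td _ A(1)]) auto
  next
    have "AE (t, s) in PiM UNIV (\<lambda>_. \<theta>) \<Otimes>\<^sub>M disk_measure \<phi> r.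
        eventually (\<lambda>n. \<zeta> * real n \<le> real (visits t A n (\<phi> s))) sequentially"
      using \<theta> eval T td A(1) \<tau> rare by (intro AE_pair_eventually_frequent_visits) auto
    then show "AE (t, s) in PiM UNIV (\<lambda>_. \<theta>) \<Otimes>\<^sub>M disk_measure \<phi> r.
        limsup (\<lambda>n. ereal (log_sum t \<phi> n s / real n)) \<le> ereal (- c)"
    proof (rule AE_mp, intro AE_I2 impI)
      fix z assume "z \<in> space (PiM UNIV (\<lambda>_. \<theta>) \<Otimes>\<^sub>M disk_measure \<phi> r)"
        and "case z of (t, s) \<Rightarrow> eventually (\<lambda>n. \<zeta> * real n \<le> real (visits t A n (\<phi> s))) sequentially"
      moreover obtain t s where "z = (t, s)" by fastforce
      ultimately show "case z of (t, s) \<Rightarrow> limsup (\<lambda>n. ereal (log_sum t \<phi> n s / real n)) \<le> ereal (- c)"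
        using \<theta>(2) by (simp add: space_pair_measure space_PiM PiE_iff limsup)
    qed
  next
    have "AE s in disk_measure \<phi> r.
        eventually (\<lambda>n. \<zeta> * real n \<le> real (visits (\<lambda>_. f) A n (\<phi> s))) sequentially"
      using td f T A(1) \<tau> rare[of "\<lambda>_. f"] by (intro AE_eventually_frequent_visits) auto
    then show "AE s in disk_measure \<phi> r.
        limsup (\<lambda>n. ereal (log_sum (\<lambda>_. f) \<phi> n s / real n)) \<le> ereal (- c)"
    proof (rule AE_mp, intro AE_I2 impI)
      fix s assume "s \<in> space (disk_measure \<phi> r)"
        and "eventually (\<lambda>n. \<zeta> * real n \<le> real (visits (\<lambda>_. f) A n (\<phi> s))) sequentially"
      then show "limsup (\<lambda>n. ereal (log_sum (\<lambda>_. f) \<phi> n s / real n)) \<le> ereal (- c)"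
        using f by (intro limsup) auto
    qed
  qed
qed

theorem lemma7p4:
  fixes Ahat :: "real^'d^'d"
    and V :: "(real^'d) set" and c0 c1 :: "real^'d"
    and Ccu Ccs :: "real^'d \<Rightarrow> (real^'d) set" and w :: real
    and \<sigma>1 \<sigma>2 \<zeta> \<tau> :: real
    and p :: nat and B :: "nat \<Rightarrow> (real^'d) set" and k0 k1 :: "nat \<Rightarrow> real^'d"
    and uu :: "'u::finite itself" and ss :: "'s::finite itself"
  assumes d2: "CARD('d) \<ge> 2"
    and anosov: "linear_anosov Ahat"
    and dim_u: "CARD('u) = dim (unstable_sp Ahat)"
    and dim_s: "CARD('s) = dim (stable_sp Ahat)"
    and V_closed: "closed V" and V_domain: "V = closure (interior V)" and V_per: "zperiodic V"
    and V_K0: "V \<subseteq> proj_pre (unit_cube c0)"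
    and V_K1: "\<forall>x\<in>V. Ahat *v x \<in> proj_pre (unit_cube c1)"
    and w_pos: "w > 0"
    and Ccu_per: "\<forall>x k. k \<in> Zd \<longrightarrow> Ccu (x + k) = Ccu x"
    and Ccs_per: "\<forall>x k. k \<in> Zd \<longrightarrow> Ccs (x + k) = Ccs x"
    and Ccu_cone: "\<forall>x. unstable_sp Ahat \<subseteq> Ccu x \<and> Ccu x \<subseteq> cone_around w (unstable_sp Ahat) (stable_sp Ahat)"
    and Ccs_cone: "\<forall>x. stable_sp Ahat \<subseteq> Ccs x \<and> Ccs x \<subseteq> cone_around w (stable_sp Ahat) (unstable_sp Ahat)"
    and \<sigma>1_gt: "\<sigma>1 > 1"
    and B_borel: "\<forall>i\<in>{1..p+1}. B i \<in> sets borel"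
    and B_per: "\<forall>i\<in>{1..p+1}. zperiodic (B i)"
    and B_disj: "\<forall>i\<in>{1..p+1}. \<forall>j\<in>{1..p+1}. i \<noteq> j \<longrightarrow> B i \<inter> B j = {}"
    and B_cover: "(\<Union>i\<in>{1..p+1}. B i) = UNIV"
    and B_V: "B (p+1) = V"
    and \<zeta>_pos: "\<zeta> > 0"
    and \<tau>_bounds: "0 < \<tau> \<and> \<tau> < 1"
    and \<sigma>2_bounds: "0 < \<sigma>2 \<and> \<sigma>2 < 1"
  shows "\<exists>\<eta>>0. \<exists>c>0. \<forall>(f::real^'d \<Rightarrow> real^'d) T (\<theta>::(real^'d \<Rightarrow> real^'d) measure).
     torus_C2_diffeo f \<and> C2_nbhd T f \<and>
     (\<forall>g\<in>T. cond_A Ccu Ccs g \<and> cond_B uu ss Ccu Ccs \<sigma>1 g \<and>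
             cond_bound uu ss Ccu Ccs (- V) \<sigma>2 g \<and> cond_bound uu ss Ccu Ccs V (1 + \<eta>) g) \<and>
     prob_space \<theta> \<and> space \<theta> = T \<and>
     (\<lambda>(g, x). g x) \<in> borel_measurable (\<theta> \<Otimes>\<^sub>M borel) \<and>
     (\<forall>i\<in>{1..p}. B i \<subseteq> proj_pre (unit_cube (k0 i)) \<and>
                  (\<forall>x\<in>B i. f x \<in> proj_pre (unit_cube (k1 i)))) \<and>
     (\<forall>(\<phi>::real^'u \<Rightarrow> real^'d) r. tangent_disk Ccu \<phi> r \<longrightarrow>
        (\<forall>t. (\<forall>j. t j \<in> T) \<longrightarrow> (\<exists>N. \<forall>n\<ge>N.
           measure (disk_measure \<phi> r)
             {s \<in> cball 0 r. real (card {j. j < n \<and> rcomp t j (\<phi> s) \<in> (\<Union>i\<in>{1..p}. B i)}) < \<zeta> * real n}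
           \<le> \<tau> ^ n)))
     \<longrightarrow>
     (\<forall>(\<phi>::real^'u \<Rightarrow> real^'d) r. tangent_disk Ccu \<phi> r \<longrightarrow>
        (\<forall>t. (\<forall>j. t j \<in> T) \<longrightarrow> (\<exists>N. \<forall>n\<ge>N.
           measure (disk_measure \<phi> r) {s \<in> cball 0 r. log_sum t \<phi> n s \<le> - c * real n}
           \<ge> 1 - \<tau> ^ n)) \<and>
        (AE (t, s) in (PiM UNIV (\<lambda>_. \<theta>)) \<Otimes>\<^sub>M disk_measure \<phi> r.
           limsup (\<lambda>n. ereal (log_sum t \<phi> n s / real n)) \<le> ereal (- c)) \<and>
        (AE s in disk_measure \<phi> r.
           limsup (\<lambda>n. ereal (log_sum (\<lambda>_. f) \<phi> n s / real n)) \<le> ereal (- c)))"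
proof -
  define c where "c = \<zeta> * - ln \<sigma>2 / 2"
  have c: "c > 0" using \<zeta>_pos \<sigma>2_bounds by (simp add: c_def mult_pos_neg)
  define A where "A = (\<Union>i\<in>{1..p}. B i)"
  have A_borel: "A \<in> sets borel"
    using B_borel unfolding A_def by (intro sets.finite_UN) auto
  have "B i \<inter> V = {}" if "i \<in> {1..p}" for i
    using B_disj[rule_format, of i "p + 1"] B_V that by auto
  then have A_V: "A \<inter> V = {}"
    unfolding A_def by blast
  have \<eta>: "exp c - 1 > 0" using c by simp
  show ?thesis
    apply (rule exI[of _ "exp c - 1"], rule conjI[OF \<eta>], rule exI[of _ c], rule conjI[OF c])
    apply (intro allI impI)
    subgoal premises prems for f T \<theta> \<phi> r
    proof -
      have T: "torus_C2_diffeo g \<and> cond_A Ccu Ccs g \<and>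
          cond_bound uu ss Ccu Ccs (- V) \<sigma>2 g \<and> cond_bound uu ss Ccu Ccs V (exp c) g" if "g \<in> T" for g
        using prems(1) that by (simp add: C2_nbhd_def)
      have rare: "\<exists>N. \<forall>n\<ge>N. measure (disk_measure \<phi> r)
          {s \<in> cball 0 r. real (visits t A n (\<phi> s)) < \<zeta> * real n} \<le> \<tau> ^ n" if "\<forall>j. t j \<in> T" for t
        using prems that by (simp add: visits_def A_def)
      show ?thesis
        using prems(1) \<zeta>_pos \<sigma>2_bounds \<tau>_bounds
        by (intro log_sum_bounds_on_disk[OF T _ _ _ _ prems(2) A_borel A_V _ _ _ _ _ _ rare])
          (auto simp: C2_nbhd_def c_def)
    qed
    done
qed

end
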